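(* Let $\rho>0$ be fixed. The class of $\rho$-dense graphs in $\mathbb{R}^d$ has polynomial expansion bounded by $f(r)=\rho\, r^{O(d)}$.
   Context: A set of objects $F$ in $\mathbb{R}^d$ has density $\rho$ if any object $o$ (not necessarily in $F$) intersects at most $\rho$ objects of $F$ with diameter at least that of $o$. A graph is $\rho$-dense (in $\mathbb{R}^d$) if it is the intersection graph of a set of objects in $\mathbb{R}^d$ with density $\rho$. A graph is $r$-shallow if some vertex reaches every vertex by a path with at most $r$ edges; an $r$-shallow minor of $G$ is a minor (edge contractions, edge/vertex deletions) whose clusters induce $r$-shallow subgraphs; $\nabla_r(G)$ is the supremum of $|E(K)|/|V(K)|$ over all $r$-shallow minors $K$ of $G$. A class has expansion bounded by $f$ if $\sup_{G}\nabla_r(G)\le f(r)$ for all $r$. *)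

theory Defs
  imports "HOL-Analysis.Analysis"
begin

definition Rd :: "nat \<Rightarrow> (nat \<Rightarrow> real) set" where
  "Rd d = {x. \<forall>i\<ge>d. x i = 0}"

definition edist :: "nat \<Rightarrow> (nat \<Rightarrow> real) \<Rightarrow> (nat \<Rightarrow> real) \<Rightarrow> real" where
  "edist d x y = L2_set (\<lambda>i. x i - y i) {..<d}"

definition bounded_in :: "nat \<Rightarrow> (nat \<Rightarrow> real) set \<Rightarrow> bool" where
  "bounded_in d S \<longleftrightarrow> S \<subseteq> Rd d \<and> (\<exists>B. \<forall>x\<in>S. \<forall>y\<in>S. edist d x y \<le> B)"

definition diam :: "nat \<Rightarrow> (nat \<Rightarrow> real) set \<Rightarrow> real" where
  "diam d S = (if S = {} then 0 else Sup {edist d x y | x y. x \<in> S \<and> y \<in> S})"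

definition has_density :: "nat \<Rightarrow> real \<Rightarrow> 'v set \<Rightarrow> ('v \<Rightarrow> (nat \<Rightarrow> real) set) \<Rightarrow> bool" where
  "has_density d \<rho> V obj \<longleftrightarrow>
     (\<forall>v\<in>V. bounded_in d (obj v)) \<and>
     (\<forall>Q. bounded_in d Q \<longrightarrow>
        real (card {v\<in>V. obj v \<inter> Q \<noteq> {} \<and> diam d (obj v) \<ge> diam d Q}) \<le> \<rho>)"

definition inter_graph :: "('v \<Rightarrow> (nat \<Rightarrow> real) set) \<Rightarrow> 'v \<Rightarrow> 'v \<Rightarrow> bool" where
  "inter_graph obj u v \<longleftrightarrow> u \<noteq> v \<and> obj u \<inter> obj v \<noteq> {}"

definition path_in :: "('v \<Rightarrow> 'v \<Rightarrow> bool) \<Rightarrow> 'v set \<Rightarrow> 'v list \<Rightarrow> bool" where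
  "path_in E X xs \<longleftrightarrow> xs \<noteq> [] \<and> distinct xs \<and> set xs \<subseteq> X \<and>
     (\<forall>i. Suc i < length xs \<longrightarrow> E (xs ! i) (xs ! Suc i))"

definition shallow :: "nat \<Rightarrow> ('v \<Rightarrow> 'v \<Rightarrow> bool) \<Rightarrow> 'v set \<Rightarrow> bool" where
  "shallow r E X \<longleftrightarrow> (\<exists>c\<in>X. \<forall>v\<in>X. \<exists>xs. path_in E X xs \<and> hd xs = c \<and> last xs = v
                                       \<and> length xs \<le> Suc r)"

text \<open>An r-shallow minor of the graph (V,E): its vertices are pairwise disjoint clusters
  P (subsets of V each inducing an r-shallow subgraph), and its edge set M consists of
  unordered pairs of distinct clusters joined by at least one edge of the graph
  (any subset of those, accounting for edge deletions).\<close>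
definition shallow_minor :: "nat \<Rightarrow> 'v set \<Rightarrow> ('v \<Rightarrow> 'v \<Rightarrow> bool) \<Rightarrow> 'v set set \<Rightarrow> 'v set set set \<Rightarrow> bool" where
  "shallow_minor r V E P M \<longleftrightarrow>
     (\<forall>X\<in>P. X \<subseteq> V \<and> shallow r E X) \<and>
     (\<forall>X\<in>P. \<forall>Y\<in>P. X \<noteq> Y \<longrightarrow> X \<inter> Y = {}) \<and>
     (\<forall>e\<in>M. \<exists>X\<in>P. \<exists>Y\<in>P. X \<noteq> Y \<and> e = {X, Y} \<and> (\<exists>u\<in>X. \<exists>w\<in>Y. E u w))"

end

theory Submission
  imports Defs
begin

text \<open>Charge every edge of the minor to its endpoint cluster X of smaller maximal object
  diameter \<open>\<delta>\<close>. As X is r-shallow, every object of X lies within distance \<open>(r+1)\<delta>\<close> of a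
  point a of the object of its center. In a neighboring cluster Y, walking from the contact
  point towards an object of maximal diameter, one meets a first object of diameter at least
  \<open>\<delta>\<close> within a further distance \<open>2r\<delta>\<close>. These objects, one for each neighbor Y, are distinct
  (clusters are disjoint), have diameter at least \<open>\<delta>\<close> and come within \<open>(3r+1)\<delta>\<close> of a. Covering
  that ball by \<open>(r+1)^O(d)\<close> grid cells of diameter \<open>\<delta>\<close>, each of which meets at most \<open>\<rho>\<close> of them
  by density, bounds the number of edges charged to X by \<open>\<rho>(r+1)^O(d)\<close>.\<close>

lemma edist_nonneg: "0 \<le> edist d x y"
  by (simp add: edist_def)

lemma edist_self [simp]: "edist d x x = 0"
  unfolding edist_def by (simp add: L2_set_0')

lemma edist_triangle: "edist d x z \<le> edist d x y + edist d y z"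
proof -
  have "edist d x z = L2_set (\<lambda>i. (x i - y i) + (y i - z i)) {..<d}"
    unfolding edist_def by (rule L2_set_cong) auto
  also have "\<dots> \<le> edist d x y + edist d y z"
    unfolding edist_def by (rule L2_set_triangle_ineq)
  finally show ?thesis .
qed

lemma abs_diff_le_edist: "i < d \<Longrightarrow> \<bar>x i - y i\<bar> \<le> edist d x y"
  using member_le_L2_set[of "{..<d}" i "\<lambda>i. \<bar>x i - y i\<bar>"]
  by (simp add: edist_def L2_set_def)

lemma sum_abs_diff_le_edist: "(\<Sum>i<d. \<bar>x i - y i\<bar>) \<le> sqrt (real d) * edist d x y"
  using L2_set_mult_ineq[of "\<lambda>i. x i - y i" "\<lambda>i. 1" "{..<d}"]
  by (simp add: edist_def L2_set_constant mult.commute)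

lemma edist_eq_0_imp_eq:
  assumes "x \<in> Rd d" "y \<in> Rd d" "edist d x y = 0"
  shows "x = y"
proof
  fix i
  show "x i = y i"
  proof (cases "i < d")
    case True
    then show ?thesis using assms(3) abs_diff_le_edist[of i d x y] by simp
  next
    case False
    then show ?thesis using assms(1,2) by (simp add: Rd_def)
  qed
qed

lemma edist_le_diam:
  assumes "bounded_in d S" "x \<in> S" "y \<in> S"
  shows "edist d x y \<le> diam d S"
proof -
  obtain B where "\<forall>x\<in>S. \<forall>y\<in>S. edist d x y \<le> B"
    using assms(1) by (auto simp: bounded_in_def)
  then have "bdd_above {edist d x y | x y. x \<in> S \<and> y \<in> S}"
    by (auto intro!: bdd_aboveI[of _ B])
  then show ?thesis using assms by (auto simp: diam_def intro!: cSup_upper)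
qed

lemma diam_le:
  assumes "\<And>x y. x \<in> S \<Longrightarrow> y \<in> S \<Longrightarrow> edist d x y \<le> B" "0 \<le> B"
  shows "diam d S \<le> B"
proof (cases "S = {}")
  case False
  then have "{edist d x y | x y. x \<in> S \<and> y \<in> S} \<noteq> {}" by auto
  then have "Sup {edist d x y | x y. x \<in> S \<and> y \<in> S} \<le> B"
    by (rule cSup_least) (use assms in auto)
  then show ?thesis using False by (simp add: diam_def)
qed (use assms in \<open>simp add: diam_def\<close>)

lemma diam_nonneg:
  assumes "bounded_in d S"
  shows "0 \<le> diam d S"
proof (cases "S = {}")
  case False
  then obtain x where "x \<in> S" by auto
  then show ?thesis using edist_le_diam[OF assms, of x x] by simp
qed (simp add: diam_def)

section \<open>Lattice points in an \<open>\<ell>\<^sub>1\<close>-ball\<close>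

definition l1_lattice_ball :: "nat \<Rightarrow> nat \<Rightarrow> (nat \<Rightarrow> int) set" where
  "l1_lattice_ball d t =
     {u \<in> PiE {..<d} (\<lambda>_. {-int (d*t)..int (d*t)}). (\<Sum>i<d. \<bar>u i\<bar>) \<le> int (d*t)}"

lemma finite_l1_lattice_ball: "finite (l1_lattice_ball d t)"
  unfolding l1_lattice_ball_def by (intro finite_Collect_conjI disjI1) (simp add: finite_PiE)

lemma sum_power_abs_symmetric_le:
  fixes x :: real
  assumes "0 \<le> x"
  shows "(\<Sum>k\<in>{-int n..int n}. x ^ nat \<bar>k\<bar>) \<le> 2 * (\<Sum>m<Suc n. x ^ m)"
proof (induction n)
  case 0
  then show ?case by simp
next
  case (Suc n)
  have eq: "{-int (Suc n)..int (Suc n)} = insert (int (Suc n)) (insert (- int (Suc n)) {-int n..int n})"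
    by auto
  have n: "nat (1 + int n) = Suc n" "nat (int n + 1) = Suc n" by auto
  have "(\<Sum>k\<in>{-int (Suc n)..int (Suc n)}. x ^ nat \<bar>k\<bar>)
     = x ^ Suc n + (x ^ Suc n + (\<Sum>k\<in>{-int n..int n}. x ^ nat \<bar>k\<bar>))"
    unfolding eq by (subst sum.insert; simp add: n)+
  also have "\<dots> \<le> 2 * (\<Sum>m<Suc (Suc n). x ^ m)" using Suc.IH by simp
  finally show ?case .
qed

lemma sum_power_abs_le:
  fixes x :: real
  assumes "0 \<le> x" "x < 1"
  shows "(\<Sum>k\<in>{-int n..int n}. x ^ nat \<bar>k\<bar>) \<le> 2 / (1 - x)"
proof -
  have "(\<Sum>m<Suc n. x ^ m) = (1 - x ^ Suc n) / (1 - x)"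
    using sum_gp_strict[of x "Suc n"] assms by simp
  also have "\<dots> \<le> 1 / (1 - x)" using assms by (intro divide_right_mono) auto
  finally show ?thesis using sum_power_abs_symmetric_le[OF assms(1), of n] by simp
qed

lemma one_plus_inverse_power_le_3: "(1 + 1 / real t) ^ t \<le> 3"
proof (cases "t = 0")
  case False
  then have "(1 + 1 / real t) ^ t \<le> exp 1"
    using exp_ge_one_plus_x_over_n_power_n[where x = 1 and n = t] by simp
  also have "\<dots> \<le> 3" by (rule exp_le)
  finally show ?thesis .
qed simp

text \<open>Rankin's trick: weighting each lattice point u by \<open>x^\<parallel>u\<parallel>\<^sub>1\<close> with \<open>x = t/(t+1)\<close> turns the
  count into a product of d geometric series, at the price of the factor \<open>x^-dt \<le> e^d\<close>.\<close>

lemma card_l1_lattice_ball_le: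
  assumes t: "t \<ge> 1"
  shows "real (card (l1_lattice_ball d t)) \<le> (6 * real t + 6) ^ d"
proof -
  define x :: real where "x = real t / (real t + 1)"
  have x0: "0 < x" and x1: "x < 1" using t by (auto simp: x_def)
  define B where "B = PiE {..<d} (\<lambda>_. {-int (d*t)..int (d*t)})"
  define S where "S = l1_lattice_ball d t"
  have finB: "finite B" unfolding B_def by (intro finite_PiE) auto
  have SB: "S \<subseteq> B" unfolding S_def B_def l1_lattice_ball_def by auto
  have weight: "x ^ (d*t) \<le> (\<Prod>i<d. x ^ nat \<bar>u i\<bar>)" if "u \<in> S" for u
  proof -
    have "int (\<Sum>i<d. nat \<bar>u i\<bar>) = (\<Sum>i<d. \<bar>u i\<bar>)" by simp
    then have "int (\<Sum>i<d. nat \<bar>u i\<bar>) \<le> int (d * t)"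
      using that unfolding S_def l1_lattice_ball_def by simp
    then have "(\<Sum>i<d. nat \<bar>u i\<bar>) \<le> d * t" by linarith
    then have "x ^ (d * t) \<le> x ^ (\<Sum>i<d. nat \<bar>u i\<bar>)"
      using x0 x1 by (simp add: power_decreasing)
    then show ?thesis by (simp add: power_sum)
  qed
  have "2 / (1 - x) = 2 * (real t + 1)" unfolding x_def by (simp add: field_simps)
  then have row: "(\<Sum>k\<in>{-int (d*t)..int (d*t)}. x ^ nat \<bar>k\<bar>) \<le> 2 * (real t + 1)"
    using sum_power_abs_le[of x "d*t"] x0 x1 by simp
  have "real (card S) * x ^ (d*t) = (\<Sum>u\<in>S. x ^ (d*t))" by simp
  also have "\<dots> \<le> (\<Sum>u\<in>S. \<Prod>i<d. x ^ nat \<bar>u i\<bar>)" using weight by (intro sum_mono) auto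
  also have "\<dots> \<le> (\<Sum>u\<in>B. \<Prod>i<d. x ^ nat \<bar>u i\<bar>)"
    using SB finB x0 by (intro sum_mono2) (auto intro!: prod_nonneg)
  also have "\<dots> = (\<Prod>i<d. \<Sum>k\<in>{-int (d*t)..int (d*t)}. x ^ nat \<bar>k\<bar>)"
    unfolding B_def by (rule prod_sum_PiE[symmetric]) auto
  also have "\<dots> = (\<Sum>k\<in>{-int (d*t)..int (d*t)}. x ^ nat \<bar>k\<bar>) ^ d" by simp
  also have "\<dots> \<le> (2 * (real t + 1)) ^ d"
    using row x0 by (intro power_mono sum_nonneg) auto
  finally have weighted: "real (card S) * x ^ (d*t) \<le> (2 * (real t + 1)) ^ d" .
  have "(1 / x) ^ t = (1 + 1 / real t) ^ t" unfolding x_def using t by (simp add: field_simps)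
  then have e: "(1 / x) ^ t \<le> 3" using one_plus_inverse_power_le_3 by simp
  have "real (card S) = real (card S) * x ^ (d*t) * ((1/x) ^ t) ^ d"
    using x0 by (simp add: field_simps flip: power_mult)
  also have "\<dots> \<le> (2 * (real t + 1)) ^ d * 3 ^ d"
    using weighted e x0 by (intro mult_mono power_mono) auto
  also have "\<dots> = (6 * real t + 6) ^ d" by (simp add: power_mult_distrib[symmetric] algebra_simps)
  finally show ?thesis unfolding S_def .
qed

definition grid_index :: "nat \<Rightarrow> real \<Rightarrow> (nat \<Rightarrow> real) \<Rightarrow> (nat \<Rightarrow> real) \<Rightarrow> nat \<Rightarrow> int" where
  "grid_index d s a x = restrict (\<lambda>i. \<lfloor>x i / s\<rfloor> - \<lfloor>a i / s\<rfloor>) {..<d}"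

definition grid_cell :: "nat \<Rightarrow> real \<Rightarrow> (nat \<Rightarrow> real) \<Rightarrow> (nat \<Rightarrow> int) \<Rightarrow> (nat \<Rightarrow> real) set" where
  "grid_cell d s a u = {x \<in> Rd d. grid_index d s a x = u}"

lemma mem_grid_cell_grid_index: "x \<in> Rd d \<Longrightarrow> x \<in> grid_cell d s a (grid_index d s a x)"
  by (simp add: grid_cell_def)

lemma abs_diff_less_1_if_floor_eq: "\<lfloor>a\<rfloor> = \<lfloor>b\<rfloor> \<Longrightarrow> \<bar>a - b\<bar> < 1" for a b :: real
proof -
  assume "\<lfloor>a\<rfloor> = \<lfloor>b\<rfloor>"
  moreover have "real_of_int \<lfloor>a\<rfloor> \<le> a" "a < real_of_int \<lfloor>a\<rfloor> + 1"
       "real_of_int \<lfloor>b\<rfloor> \<le> b" "b < real_of_int \<lfloor>b\<rfloor> + 1" by linarith+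
  ultimately show ?thesis by (simp add: abs_less_iff) linarith
qed

lemma abs_floor_diff_le: "\<bar>real_of_int (\<lfloor>a\<rfloor> - \<lfloor>b\<rfloor>)\<bar> \<le> \<bar>a - b\<bar> + 1" for a b :: real
proof -
  have "real_of_int \<lfloor>a\<rfloor> \<le> a" "a < real_of_int \<lfloor>a\<rfloor> + 1"
       "real_of_int \<lfloor>b\<rfloor> \<le> b" "b < real_of_int \<lfloor>b\<rfloor> + 1" by linarith+
  then show ?thesis by (simp add: abs_le_iff) linarith
qed

lemma edist_le_grid_cell:
  assumes s: "0 < s" and x: "x \<in> grid_cell d s a u" and y: "y \<in> grid_cell d s a u"
  shows "edist d x y \<le> sqrt (real d) * s"
proof -
  have "\<bar>x i - y i\<bar> \<le> s" if "i < d" for i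
  proof -
    have "\<lfloor>x i / s\<rfloor> = \<lfloor>y i / s\<rfloor>"
      using x y that by (auto simp: grid_cell_def grid_index_def dest!: fun_cong[of _ _ i])
    then have "\<bar>x i / s - y i / s\<bar> < 1" by (rule abs_diff_less_1_if_floor_eq)
    also have "\<bar>x i / s - y i / s\<bar> = \<bar>x i - y i\<bar> / s"
      using s by (simp add: diff_divide_distrib[symmetric])
    finally show ?thesis using s by (simp add: divide_less_eq)
  qed
  then have "L2_set (\<lambda>i. \<bar>x i - y i\<bar>) {..<d} \<le> L2_set (\<lambda>i. s) {..<d}"
    by (intro L2_set_mono) auto
  also have "\<dots> = sqrt (real d) * s" using s by (simp add: L2_set_constant)
  finally show ?thesis unfolding edist_def L2_set_def by simp
qed

lemma bounded_grid_cell: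
  assumes "0 < s"
  shows "bounded_in d (grid_cell d s a u)"
proof -
  have "grid_cell d s a u \<subseteq> Rd d" by (auto simp: grid_cell_def)
  with edist_le_grid_cell[OF assms] show ?thesis unfolding bounded_in_def by blast
qed

lemma diam_grid_cell_le: "0 < s \<Longrightarrow> diam d (grid_cell d s a u) \<le> sqrt (real d) * s"
  by (rule diam_le) (auto intro: edist_le_grid_cell)

lemma grid_index_in_l1_lattice_ball:
  assumes s: "0 < s" and q: "edist d a q \<le> real R * (sqrt (real d) * s)"
  shows "grid_index d s a q \<in> l1_lattice_ball d (R + 1)"
proof -
  define u where "u = grid_index d s a q"
  have coord: "real_of_int \<bar>u i\<bar> \<le> \<bar>a i - q i\<bar> / s + 1" if "i < d" for i
  proof -
    have "real_of_int \<bar>u i\<bar> \<le> \<bar>q i / s - a i / s\<bar> + 1"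
      using that abs_floor_diff_le[of "q i / s" "a i / s"] by (simp add: u_def grid_index_def)
    also have "\<bar>q i / s - a i / s\<bar> = \<bar>a i - q i\<bar> / s"
      using s by (simp add: diff_divide_distrib[symmetric] abs_minus_commute)
    finally show ?thesis .
  qed
  have "real_of_int (\<Sum>i<d. \<bar>u i\<bar>) = (\<Sum>i<d. real_of_int \<bar>u i\<bar>)" by simp
  also have "\<dots> \<le> (\<Sum>i<d. \<bar>a i - q i\<bar> / s + 1)"
    using coord by (intro sum_mono) auto
  also have "\<dots> = (\<Sum>i<d. \<bar>a i - q i\<bar>) / s + real d"
    by (simp add: sum.distrib sum_divide_distrib)
  also have "\<dots> \<le> sqrt (real d) * edist d a q / s + real d"
    using sum_abs_diff_le_edist[where x = a and y = q] s by (simp add: divide_right_mono)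
  also have "\<dots> \<le> sqrt (real d) * (real R * (sqrt (real d) * s)) / s + real d"
    using q s by (intro add_right_mono divide_right_mono mult_left_mono) auto
  also have "sqrt (real d) * (real R * (sqrt (real d) * s)) / s = real d * real R"
    using s by simp
  also have "real d * real R + real d = real_of_int (int (d * (R + 1)))"
    by (simp add: algebra_simps)
  finally have sum_le: "(\<Sum>i<d. \<bar>u i\<bar>) \<le> int (d * (R + 1))" by linarith
  have "\<bar>u i\<bar> \<le> (\<Sum>i<d. \<bar>u i\<bar>)" if "i < d" for i
    using that by (intro member_le_sum) auto
  then have "u i \<in> {-int (d * (R + 1))..int (d * (R + 1))}" if "i < d" for i
    using that sum_le by fastforce
  moreover have "u \<in> extensional {..<d}" unfolding u_def grid_index_def by simp
  ultimately have "u \<in> PiE {..<d} (\<lambda>_. {-int (d * (R + 1))..int (d * (R + 1))})"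
    by (simp add: PiE_iff)
  with sum_le show ?thesis unfolding l1_lattice_ball_def u_def[symmetric] by simp
qed

lemma has_density_nonneg:
  assumes "has_density d \<rho> V obj"
  shows "0 \<le> \<rho>"
proof -
  have "bounded_in d {}" by (simp add: bounded_in_def)
  then have "real (card {v\<in>V. obj v \<inter> {} \<noteq> {} \<and> diam d (obj v) \<ge> diam d {}}) \<le> \<rho>"
    using assms unfolding has_density_def by blast
  then show ?thesis by simp
qed

lemma card_meeting_le_density:
  "has_density d \<rho> V obj \<Longrightarrow> bounded_in d Q \<Longrightarrow>
   real (card {v\<in>V. obj v \<inter> Q \<noteq> {} \<and> diam d (obj v) \<ge> diam d Q}) \<le> \<rho>"
  unfolding has_density_def by blast

lemma card_objects_containing_point_le:
  assumes V: "finite V" and dens: "has_density d \<rho> V obj" and a: "a \<in> Rd d"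
  shows "real (card {v\<in>V. \<exists>q\<in>obj v. edist d a q \<le> 0}) \<le> \<rho>"
proof -
  have a_bounded: "bounded_in d {a}" using a by (auto simp: bounded_in_def)
  have "diam d {a} \<le> 0" by (rule diam_le) auto
  then have diam_a: "diam d {a} = 0" using diam_nonneg[OF a_bounded] by simp
  have "{v\<in>V. \<exists>q\<in>obj v. edist d a q \<le> 0}
      \<subseteq> {v\<in>V. obj v \<inter> {a} \<noteq> {} \<and> diam d (obj v) \<ge> diam d {a}}"
  proof safe
    fix v q assume v: "v \<in> V" and q: "q \<in> obj v" "edist d a q \<le> 0"
    have bounded: "bounded_in d (obj v)" using dens v by (simp add: has_density_def)
    then have "q \<in> Rd d" using q(1) by (auto simp: bounded_in_def)
    then have "a = q" using edist_eq_0_imp_eq[OF a] q(2) edist_nonneg[of d a q] by simp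
    then show "obj v \<inter> {a} = {} \<Longrightarrow> False" using q(1) by blast
    show "diam d {a} \<le> diam d (obj v)" using diam_a diam_nonneg[OF bounded] by simp
  qed
  then have "card {v\<in>V. \<exists>q\<in>obj v. edist d a q \<le> 0}
      \<le> card {v\<in>V. obj v \<inter> {a} \<noteq> {} \<and> diam d (obj v) \<ge> diam d {a}}"
    using V by (intro card_mono) auto
  with card_meeting_le_density[OF dens a_bounded] show ?thesis by linarith
qed

text \<open>Cover the ball of radius \<open>R\<delta>\<close> around a by grid cells of diameter \<open>\<delta>\<close>: each cell meets at
  most \<open>\<rho>\<close> objects of diameter \<open>\<ge> \<delta>\<close>, and the cells needed are indexed by an \<open>\<ell>\<^sub>1\<close>-ball of
  the lattice.\<close>

lemma card_large_objects_near_le_pos: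
  assumes d: "d \<ge> 1" and V: "finite V" and dens: "has_density d \<rho> V obj"
    and \<delta>: "0 < \<delta>"
  shows "real (card {v\<in>V. \<delta> \<le> diam d (obj v) \<and> (\<exists>q\<in>obj v. edist d a q \<le> real R * \<delta>)})
          \<le> \<rho> * (6 * real (R + 1) + 6) ^ d"
proof -
  define s where "s = \<delta> / sqrt (real d)"
  have s: "0 < s" and \<delta>_eq: "\<delta> = sqrt (real d) * s" using \<delta> d by (auto simp: s_def)
  define Z where "Z = {v\<in>V. \<delta> \<le> diam d (obj v) \<and> (\<exists>q\<in>obj v. edist d a q \<le> real R * \<delta>)}"
  define meeting where
    "meeting u = {v\<in>V. obj v \<inter> grid_cell d s a u \<noteq> {} \<and> diam d (obj v) \<ge> diam d (grid_cell d s a u)}"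
    for u
  define W where "W = grid_index d s a ` {q \<in> Rd d. edist d a q \<le> real R * \<delta>}"
  have W: "W \<subseteq> l1_lattice_ball d (R + 1)"
    unfolding W_def \<delta>_eq using grid_index_in_l1_lattice_ball[OF s] by blast
  have finW: "finite W" using finite_subset[OF W finite_l1_lattice_ball] .
  have "Z \<subseteq> (\<Union>u\<in>W. meeting u)"
  proof
    fix v assume "v \<in> Z"
    then obtain q where q: "v \<in> V" "q \<in> obj v" "edist d a q \<le> real R * \<delta>" "\<delta> \<le> diam d (obj v)"
      unfolding Z_def by auto
    have "q \<in> Rd d" using dens q(1,2) by (auto simp: has_density_def bounded_in_def)
    then have "q \<in> grid_cell d s a (grid_index d s a q)" and "grid_index d s a q \<in> W"
      using q(3) by (auto simp: W_def mem_grid_cell_grid_index)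
    moreover have "diam d (grid_cell d s a (grid_index d s a q)) \<le> diam d (obj v)"
      using diam_grid_cell_le[OF s] q(4) \<delta>_eq by (metis order_trans)
    ultimately show "v \<in> (\<Union>u\<in>W. meeting u)" using q(1,2) unfolding meeting_def by blast
  qed
  then have "card Z \<le> card (\<Union>u\<in>W. meeting u)"
    using V finW by (intro card_mono) (auto simp: meeting_def)
  also have "\<dots> \<le> (\<Sum>u\<in>W. card (meeting u))" by (intro card_UN_le finW)
  finally have "real (card Z) \<le> (\<Sum>u\<in>W. real (card (meeting u)))" by (simp flip: of_nat_sum)
  also have "\<dots> \<le> (\<Sum>u\<in>W. \<rho>)"
    using card_meeting_le_density[OF dens bounded_grid_cell[OF s]]
    by (intro sum_mono) (simp add: meeting_def)
  also have "\<dots> \<le> real (card (l1_lattice_ball d (R + 1))) * \<rho>"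
    using card_mono[OF finite_l1_lattice_ball W] has_density_nonneg[OF dens]
    by (simp add: mult_right_mono)
  also have "\<dots> \<le> (6 * real (R + 1) + 6) ^ d * \<rho>"
    using card_l1_lattice_ball_le[of "R + 1" d] has_density_nonneg[OF dens]
    by (intro mult_right_mono) auto
  finally show ?thesis unfolding Z_def by (simp add: mult.commute)
qed

lemma card_large_objects_near_le:
  assumes "d \<ge> 1" "finite V" and dens: "has_density d \<rho> V obj"
    and "0 \<le> \<delta>" "a \<in> Rd d"
  shows "real (card {v\<in>V. \<delta> \<le> diam d (obj v) \<and> (\<exists>q\<in>obj v. edist d a q \<le> real R * \<delta>)})
          \<le> \<rho> * (6 * real (R + 1) + 6) ^ d"
proof (cases "\<delta> = 0")
  case True
  have "card {v\<in>V. \<delta> \<le> diam d (obj v) \<and> (\<exists>q\<in>obj v. edist d a q \<le> real R * \<delta>)}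
      \<le> card {v\<in>V. \<exists>q\<in>obj v. edist d a q \<le> 0}"
    using True \<open>finite V\<close> by (intro card_mono) auto
  also note card_objects_containing_point_le[OF \<open>finite V\<close> dens \<open>a \<in> Rd d\<close>]
  also have "\<rho> \<le> \<rho> * (6 * real (R + 1) + 6) ^ d"
    using has_density_nonneg[OF dens] by (simp add: mult_le_cancel_left1 one_le_power)
  finally show ?thesis by simp
next
  case False
  with assms show ?thesis by (intro card_large_objects_near_le_pos) auto
qed

section \<open>Chains of intersecting objects\<close>

definition intersecting_chain :: "('v \<Rightarrow> (nat \<Rightarrow> real) set) \<Rightarrow> (nat \<Rightarrow> 'v) \<Rightarrow> nat \<Rightarrow> bool" where
  "intersecting_chain obj f k \<longleftrightarrow> (\<forall>i<k. obj (f i) \<inter> obj (f (Suc i)) \<noteq> {})"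

lemma intersecting_chain_Suc_shift:
  "intersecting_chain obj f (Suc k) \<Longrightarrow> intersecting_chain obj (\<lambda>i. f (Suc i)) k"
  unfolding intersecting_chain_def by auto

lemma intersecting_chain_reverse_append:
  assumes "intersecting_chain obj g k" "intersecting_chain obj h l" "g 0 = h 0"
  shows "intersecting_chain obj (\<lambda>i. if i \<le> k then g (k - i) else h (i - k)) (k + l)"
  unfolding intersecting_chain_def
proof (intro allI impI)
  fix i assume i: "i < k + l"
  show "obj (if i \<le> k then g (k - i) else h (i - k)) \<inter>
        obj (if Suc i \<le> k then g (k - Suc i) else h (Suc i - k)) \<noteq> {}"
  proof (cases "i < k")
    case True
    then have "obj (g (k - Suc i)) \<inter> obj (g (Suc (k - Suc i))) \<noteq> {}"
      using assms(1) unfolding intersecting_chain_def by simp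
    moreover have "Suc (k - Suc i) = k - i" using True by simp
    ultimately show ?thesis using True by (auto simp: Int_commute)
  next
    case False
    then have "(if i \<le> k then g (k - i) else h (i - k)) = h (i - k)"
      using assms(3) by (cases "i = k") auto
    moreover have "(if Suc i \<le> k then g (k - Suc i) else h (Suc i - k)) = h (Suc (i - k))"
      using False by (simp add: Suc_diff_le)
    moreover have "i - k < l" using i False by simp
    ultimately show ?thesis using assms(2) unfolding intersecting_chain_def by simp
  qed
qed

lemma edist_le_intersecting_chain:
  assumes "intersecting_chain obj f k"
    and "\<forall>i\<le>k. bounded_in d (obj (f i)) \<and> diam d (obj (f i)) \<le> D"
    and "p \<in> obj (f 0)" "q \<in> obj (f k)"
  shows "edist d p q \<le> (real k + 1) * D"
  using assms
proof (induction k arbitrary: f p)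
  case 0
  then show ?case using edist_le_diam[of d "obj (f 0)" p q] by auto
next
  case (Suc k)
  obtain b where b: "b \<in> obj (f 0)" "b \<in> obj (f 1)"
    using Suc.prems(1) unfolding intersecting_chain_def by fastforce
  have "edist d b q \<le> (real k + 1) * D"
    using Suc.IH[OF intersecting_chain_Suc_shift[OF Suc.prems(1)], of b] Suc.prems b by auto
  moreover have "edist d p b \<le> D"
    using edist_le_diam[of d "obj (f 0)" p b] Suc.prems b by force
  ultimately show ?case using edist_triangle[of d p q b] by (simp add: algebra_simps)
qed

text \<open>The first object of diameter at least \<open>\<delta>\<close> along the chain is reached through objects of
  diameter less than \<open>\<delta>\<close>.\<close>

lemma intersecting_chain_reaches_large_object:
  assumes "intersecting_chain obj f k" "\<forall>i\<le>k. bounded_in d (obj (f i))"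
    and "\<delta> \<le> diam d (obj (f k))" "p \<in> obj (f 0)"
  shows "\<exists>j\<le>k. \<delta> \<le> diam d (obj (f j)) \<and> (\<exists>q\<in>obj (f j). edist d p q \<le> real j * \<delta>)"
  using assms
proof (induction k arbitrary: f p)
  case 0
  then show ?case by (auto intro!: bexI[of _ p])
next
  case (Suc k)
  show ?case
  proof (cases "\<delta> \<le> diam d (obj (f 0))")
    case True
    then show ?thesis using Suc.prems by (auto intro!: exI[of _ 0] bexI[of _ p])
  next
    case False
    obtain b where b: "b \<in> obj (f 0)" "b \<in> obj (f 1)"
      using Suc.prems(1) unfolding intersecting_chain_def by fastforce
    obtain j q where jq: "j \<le> k" "\<delta> \<le> diam d (obj (f (Suc j)))" "q \<in> obj (f (Suc j))"
       "edist d b q \<le> real j * \<delta>"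
      using Suc.IH[OF intersecting_chain_Suc_shift[OF Suc.prems(1)], of b] Suc.prems b by auto
    have "edist d p b \<le> diam d (obj (f 0))"
      using edist_le_diam[of d "obj (f 0)" p b] Suc.prems b by force
    then have "edist d p q \<le> real (Suc j) * \<delta>"
      using edist_triangle[of d p q b] jq False by (simp add: algebra_simps)
    then show ?thesis using jq by (intro exI[of _ "Suc j"]) auto
  qed
qed

definition chain_center :: "('v \<Rightarrow> (nat \<Rightarrow> real) set) \<Rightarrow> nat \<Rightarrow> 'v set \<Rightarrow> 'v \<Rightarrow> bool" where
  "chain_center obj r X c \<longleftrightarrow> c \<in> X \<and>
     (\<forall>v\<in>X. \<exists>f k. k \<le> r \<and> intersecting_chain obj f k \<and> f 0 = c \<and> f k = v \<and> (\<forall>i\<le>k. f i \<in> X))"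

lemma shallow_imp_chain_center:
  assumes "shallow r (inter_graph obj) X"
  shows "\<exists>c. chain_center obj r X c"
proof -
  obtain c where c: "c \<in> X" and paths: "\<forall>v\<in>X. \<exists>xs. path_in (inter_graph obj) X xs \<and>
      hd xs = c \<and> last xs = v \<and> length xs \<le> Suc r"
    using assms unfolding shallow_def by blast
  have "\<exists>f k. k \<le> r \<and> intersecting_chain obj f k \<and> f 0 = c \<and> f k = v \<and> (\<forall>i\<le>k. f i \<in> X)"
    if "v \<in> X" for v
  proof -
    obtain xs where xs: "path_in (inter_graph obj) X xs" "hd xs = c" "last xs = v"
        "length xs \<le> Suc r"
      using paths \<open>v \<in> X\<close> by blast
    then have ne: "xs \<noteq> []" and "set xs \<subseteq> X" by (auto simp: path_in_def)
    then have "\<forall>i\<le>length xs - 1. xs ! i \<in> X"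
      by (metis Suc_pred' le_imp_less_Suc length_greater_0_conv nth_mem subsetD)
    moreover have "intersecting_chain obj ((!) xs) (length xs - 1)"
      using xs(1) unfolding path_in_def inter_graph_def intersecting_chain_def
      by (metis Suc_diff_1 length_greater_0_conv ne not_less_eq)
    ultimately show ?thesis using xs ne
      by (intro exI[of _ "(!) xs"] exI[of _ "length xs - 1"])
         (auto simp: hd_conv_nth last_conv_nth)
  qed
  with c show ?thesis unfolding chain_center_def by blast
qed

lemma chain_center_obj_nonempty:
  assumes "chain_center obj r X c" "u \<in> X" "obj u \<noteq> {}"
  shows "obj c \<noteq> {}"
proof -
  obtain f k where "intersecting_chain obj f k" "f 0 = c" "f k = u"
    using assms(1,2) unfolding chain_center_def by blast
  with assms(3) show ?thesis by (cases k) (auto simp: intersecting_chain_def)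
qed

lemma card_le_of_disjoint_witnesses:
  assumes "finite V" "\<And>Y. Y \<in> Ys \<Longrightarrow> Y \<subseteq> V" "pairwise disjnt Ys"
    and witness: "\<And>Y. Y \<in> Ys \<Longrightarrow> \<exists>z\<in>Y. Q z"
  shows "card Ys \<le> card {v\<in>V. Q v}"
proof -
  define pick where "pick Y = (SOME z. z \<in> Y \<and> Q z)" for Y
  have pick: "pick Y \<in> Y \<and> Q (pick Y)" if Y: "Y \<in> Ys" for Y
  proof -
    obtain z where "z \<in> Y" "Q z" using witness[OF Y] by blast
    then show ?thesis unfolding pick_def by (rule someI[where P = "\<lambda>z. z \<in> Y \<and> Q z", OF conjI])
  qed
  have "inj_on pick Ys"
  proof (rule inj_onI)
    fix Y Z assume "Y \<in> Ys" "Z \<in> Ys" "pick Y = pick Z"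
    then have "\<not> disjnt Y Z" using pick unfolding disjnt_def by force
    with \<open>Y \<in> Ys\<close> \<open>Z \<in> Ys\<close> \<open>pairwise disjnt Ys\<close> show "Y = Z" by (meson pairwiseD)
  qed
  then have "card Ys = card (pick ` Ys)" by (rule card_image[symmetric])
  also have "\<dots> \<le> card {v\<in>V. Q v}"
  proof (rule card_mono)
    show "pick ` Ys \<subseteq> {v\<in>V. Q v}" using pick assms(2) by blast
  qed (simp add: assms(1))
  finally show ?thesis .
qed

section \<open>Shallow minors of dense intersection graphs\<close>

locale dense_shallow_minor =
  fixes d :: nat and \<rho> :: real and V :: "'v set" and obj :: "'v \<Rightarrow> (nat \<Rightarrow> real) set"
    and r :: nat and P :: "'v set set" and M :: "'v set set set"
  assumes dim_pos: "d \<ge> 1" and finite_V: "finite V" and density: "has_density d \<rho> V obj"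
    and minor: "shallow_minor r V (inter_graph obj) P M"
begin

lemma bounded_obj: "v \<in> V \<Longrightarrow> bounded_in d (obj v)"
  using density by (simp add: has_density_def)

lemma cluster_subset: "X \<in> P \<Longrightarrow> X \<subseteq> V"
  using minor by (simp add: shallow_minor_def)

lemma cluster_shallow: "X \<in> P \<Longrightarrow> shallow r (inter_graph obj) X"
  using minor by (simp add: shallow_minor_def)

lemma clusters_disjoint: "X \<in> P \<Longrightarrow> Y \<in> P \<Longrightarrow> X \<noteq> Y \<Longrightarrow> X \<inter> Y = {}"
  using minor by (simp add: shallow_minor_def)

lemma edge_between_clusters:
  assumes "e \<in> M"
  obtains X Y u w where "X \<in> P" "Y \<in> P" "X \<noteq> Y" "e = {X, Y}" "u \<in> X" "w \<in> Y"
    "inter_graph obj u w"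
proof -
  have "\<exists>X\<in>P. \<exists>Y\<in>P. X \<noteq> Y \<and> e = {X, Y} \<and> (\<exists>u\<in>X. \<exists>w\<in>Y. inter_graph obj u w)"
    using minor assms by (simp add: shallow_minor_def)
  with that show ?thesis by blast
qed

lemma finite_clusters: "finite P"
proof (rule finite_subset)
  show "P \<subseteq> Pow V" using cluster_subset by blast
qed (simp add: finite_V)

lemma finite_cluster: "X \<in> P \<Longrightarrow> finite X"
  using cluster_subset finite_V finite_subset by blast

lemma cluster_nonempty: "X \<in> P \<Longrightarrow> X \<noteq> {}"
  using cluster_shallow by (auto simp: shallow_def)

definition cluster_diam :: "'v set \<Rightarrow> real" where
  "cluster_diam X = Max ((\<lambda>v. diam d (obj v)) ` X)"

lemma diam_le_cluster_diam: "X \<in> P \<Longrightarrow> v \<in> X \<Longrightarrow> diam d (obj v) \<le> cluster_diam X"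
  unfolding cluster_diam_def using finite_cluster by simp

lemma cluster_diam_attained:
  assumes "X \<in> P"
  shows "\<exists>v\<in>X. diam d (obj v) = cluster_diam X"
proof -
  have "cluster_diam X \<in> (\<lambda>v. diam d (obj v)) ` X"
    unfolding cluster_diam_def using finite_cluster[OF assms] cluster_nonempty[OF assms] by simp
  then show ?thesis by auto
qed

lemma cluster_diam_nonneg:
  assumes "X \<in> P"
  shows "0 \<le> cluster_diam X"
proof -
  obtain v where "v \<in> X" "diam d (obj v) = cluster_diam X"
    using cluster_diam_attained[OF assms] by blast
  then show ?thesis using cluster_subset[OF assms] bounded_obj diam_nonneg by (metis subsetD)
qed

lemma edist_le_from_center:
  assumes X: "X \<in> P" and c: "chain_center obj r X c" and a: "a \<in> obj c"
    and u: "u \<in> X" and p: "p \<in> obj u"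
  shows "edist d a p \<le> (real r + 1) * cluster_diam X"
proof -
  obtain f k where f: "k \<le> r" "intersecting_chain obj f k" "f 0 = c" "f k = u" "\<forall>i\<le>k. f i \<in> X"
    using c u unfolding chain_center_def by blast
  have "\<forall>i\<le>k. bounded_in d (obj (f i)) \<and> diam d (obj (f i)) \<le> cluster_diam X"
    using f(5) X cluster_subset bounded_obj diam_le_cluster_diam by blast
  then have "edist d a p \<le> (real k + 1) * cluster_diam X"
    using edist_le_intersecting_chain[OF f(2)] a p f(3,4) by blast
  also have "\<dots> \<le> (real r + 1) * cluster_diam X"
    using f(1) cluster_diam_nonneg[OF X] by (intro mult_right_mono) auto
  finally show ?thesis .
qed

text \<open>Walk from w back to the center of Y and on to an object of maximal diameter.\<close>

lemma large_object_near_in_cluster: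
  assumes Y: "Y \<in> P" and w: "w \<in> Y" and p: "p \<in> obj w"
    and \<delta>: "0 \<le> \<delta>" "\<delta> \<le> cluster_diam Y"
  shows "\<exists>z\<in>Y. \<delta> \<le> diam d (obj z) \<and> (\<exists>q\<in>obj z. edist d p q \<le> real (2 * r) * \<delta>)"
proof -
  obtain c where c: "chain_center obj r Y c"
    using shallow_imp_chain_center[OF cluster_shallow[OF Y]] by blast
  obtain y where y: "y \<in> Y" "diam d (obj y) = cluster_diam Y"
    using cluster_diam_attained[OF Y] by blast
  obtain g k where g: "k \<le> r" "intersecting_chain obj g k" "g 0 = c" "g k = w" "\<forall>i\<le>k. g i \<in> Y"
    using c w unfolding chain_center_def by blast
  obtain h l where h: "l \<le> r" "intersecting_chain obj h l" "h 0 = c" "h l = y" "\<forall>i\<le>l. h i \<in> Y"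
    using c y(1) unfolding chain_center_def by blast
  define f where "f i = (if i \<le> k then g (k - i) else h (i - k))" for i
  have f: "intersecting_chain obj f (k + l)"
    unfolding f_def using intersecting_chain_reverse_append[OF g(2) h(2)] g(3) h(3) by simp
  have fY: "\<forall>i\<le>k + l. f i \<in> Y" unfolding f_def using g(5) h(5) by auto
  have f0: "f 0 = w" and fkl: "f (k + l) = y"
    unfolding f_def using g(3,4) h(3,4) by (cases l; simp)+
  have "\<forall>i\<le>k + l. bounded_in d (obj (f i))"
    using fY cluster_subset[OF Y] bounded_obj by blast
  moreover have "\<delta> \<le> diam d (obj (f (k + l)))" using fkl y(2) \<delta>(2) by simp
  moreover have "p \<in> obj (f 0)" using f0 p by simp
  ultimately obtain j q where j: "j \<le> k + l" "\<delta> \<le> diam d (obj (f j))" "q \<in> obj (f j)"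
      "edist d p q \<le> real j * \<delta>"
    using intersecting_chain_reaches_large_object[OF f] by blast
  have "real j * \<delta> \<le> real (2 * r) * \<delta>"
    using j(1) g(1) h(1) \<delta>(1) by (intro mult_right_mono) auto
  with j(4) have "edist d p q \<le> real (2 * r) * \<delta>" by linarith
  then show ?thesis using j(2,3) fY j(1) by blast
qed

definition upper_neighbors :: "'v set \<Rightarrow> 'v set set" where
  "upper_neighbors X =
     {Y\<in>P. Y \<noteq> X \<and> cluster_diam X \<le> cluster_diam Y \<and> (\<exists>u\<in>X. \<exists>w\<in>Y. inter_graph obj u w)}"

lemma upper_neighbor_has_large_object_near:
  assumes X: "X \<in> P" and c: "chain_center obj r X c" and a: "a \<in> obj c"
    and Y: "Y \<in> upper_neighbors X"
  shows "\<exists>z\<in>Y. cluster_diam X \<le> diam d (obj z) \<and>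
           (\<exists>q\<in>obj z. edist d a q \<le> real (3 * r + 1) * cluster_diam X)"
proof -
  obtain u w p where uw: "Y \<in> P" "cluster_diam X \<le> cluster_diam Y" "u \<in> X" "w \<in> Y"
      and p: "p \<in> obj u" "p \<in> obj w"
    using Y unfolding upper_neighbors_def inter_graph_def by blast
  obtain z q where z: "z \<in> Y" "cluster_diam X \<le> diam d (obj z)" "q \<in> obj z"
      "edist d p q \<le> real (2 * r) * cluster_diam X"
    using large_object_near_in_cluster[OF uw(1,4) p(2) cluster_diam_nonneg[OF X] uw(2)] by blast
  have "edist d a q \<le> (real r + 1) * cluster_diam X + real (2 * r) * cluster_diam X"
    using edist_triangle[of d a q p] edist_le_from_center[OF X c a uw(3) p(1)] z(4) by linarith
  then show ?thesis using z by (auto simp: algebra_simps)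
qed

lemma upper_neighbors_disjoint: "pairwise disjnt (upper_neighbors X)"
  using clusters_disjoint by (auto simp: pairwise_def disjnt_def upper_neighbors_def)

lemma card_upper_neighbors_le:
  assumes X: "X \<in> P"
  shows "real (card (upper_neighbors X)) \<le> \<rho> * (18 * real r + 18) ^ d"
proof (cases "upper_neighbors X = {}")
  case True
  then show ?thesis using has_density_nonneg[OF density] by simp
next
  case False
  obtain c where c: "chain_center obj r X c"
    using shallow_imp_chain_center[OF cluster_shallow[OF X]] by blast
  obtain u w where "u \<in> X" "inter_graph obj u w"
    using False unfolding upper_neighbors_def by blast
  then obtain a where a: "a \<in> obj c"
    using chain_center_obj_nonempty[OF c] by (auto simp: inter_graph_def)
  have "c \<in> V" using c cluster_subset[OF X] by (auto simp: chain_center_def)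
  then have "a \<in> Rd d" using a bounded_obj by (auto simp: bounded_in_def)
  define near where "near v \<longleftrightarrow> cluster_diam X \<le> diam d (obj v) \<and>
      (\<exists>q\<in>obj v. edist d a q \<le> real (3 * r + 1) * cluster_diam X)" for v
  have "card (upper_neighbors X) \<le> card {v\<in>V. near v}"
  proof (rule card_le_of_disjoint_witnesses[OF finite_V _ upper_neighbors_disjoint])
    show "Y \<subseteq> V" if "Y \<in> upper_neighbors X" for Y
      using that cluster_subset by (simp add: upper_neighbors_def)
    show "\<exists>z\<in>Y. near z" if "Y \<in> upper_neighbors X" for Y
      using upper_neighbor_has_large_object_near[OF X c a that] unfolding near_def .
  qed
  moreover have "real (card {v\<in>V. near v}) \<le> \<rho> * (6 * real (3 * r + 1 + 1) + 6) ^ d"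
    unfolding near_def using \<open>a \<in> Rd d\<close>
    by (rule card_large_objects_near_le[OF dim_pos finite_V density cluster_diam_nonneg[OF X]])
  ultimately show ?thesis by (simp add: algebra_simps)
qed

lemma card_edges_le: "real (card M) \<le> real (card P) * (\<rho> * (18 * real r + 18) ^ d)"
proof -
  have "M \<subseteq> (\<Union>X\<in>P. (\<lambda>Y. {X, Y}) ` upper_neighbors X)"
  proof
    fix e assume "e \<in> M"
    then obtain X Y u w where XY: "X \<in> P" "Y \<in> P" "X \<noteq> Y" "e = {X, Y}" "u \<in> X" "w \<in> Y"
        "inter_graph obj u w"
      by (rule edge_between_clusters)
    show "e \<in> (\<Union>X\<in>P. (\<lambda>Y. {X, Y}) ` upper_neighbors X)"
    proof (cases "cluster_diam X \<le> cluster_diam Y")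
      case True
      then have "Y \<in> upper_neighbors X" using XY unfolding upper_neighbors_def by blast
      then show ?thesis using XY(1,4) by blast
    next
      case False
      have "inter_graph obj w u" using XY(7) by (auto simp: inter_graph_def)
      with False have "X \<in> upper_neighbors Y" using XY(1-3,5,6) unfolding upper_neighbors_def by force
      moreover have "e = {Y, X}" using XY(4) by blast
      ultimately show ?thesis using XY(2) by blast
    qed
  qed
  moreover have finite_upper: "finite (upper_neighbors X)" for X
    using finite_clusters by (simp add: upper_neighbors_def)
  ultimately have "card M \<le> card (\<Union>X\<in>P. (\<lambda>Y. {X, Y}) ` upper_neighbors X)"
    using finite_clusters by (intro card_mono) auto
  also have "\<dots> \<le> (\<Sum>X\<in>P. card ((\<lambda>Y. {X, Y}) ` upper_neighbors X))"
    by (rule card_UN_le[OF finite_clusters])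
  also have "\<dots> \<le> (\<Sum>X\<in>P. card (upper_neighbors X))"
    by (intro sum_mono card_image_le finite_upper)
  finally have "real (card M) \<le> (\<Sum>X\<in>P. real (card (upper_neighbors X)))"
    by (simp flip: of_nat_sum)
  also have "\<dots> \<le> (\<Sum>X\<in>P. \<rho> * (18 * real r + 18) ^ d)"
    by (intro sum_mono card_upper_neighbors_le)
  finally show ?thesis by simp
qed

end

lemma power_18_mult_succ_le_powr_5: "(18 * real r + 18) ^ d \<le> (real r + 2) powr (5 * real d)"
proof -
  have "18 * real r + 18 \<le> (real r + 2) ^ 2 * 8" by (simp add: power2_eq_square algebra_simps)
  also have "\<dots> \<le> (real r + 2) ^ 2 * (real r + 2) ^ 3"
    using power_mono[of 2 "real r + 2" 3] by (intro mult_left_mono) auto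
  also have "\<dots> = (real r + 2) ^ 5" by (simp flip: power_add)
  finally have "(18 * real r + 18) ^ d \<le> ((real r + 2) ^ 5) ^ d"
    by (intro power_mono) auto
  also have "\<dots> = (real r + 2) ^ (5 * d)" by (simp add: power_mult)
  also have "\<dots> = (real r + 2) powr (5 * real d)" by (simp add: powr_realpow[symmetric])
  finally show ?thesis .
qed

theorem mainTheorem10:
  "\<exists>C>0. \<forall>(d::nat) (\<rho>::real) (V::nat set) (obj::nat \<Rightarrow> (nat \<Rightarrow> real) set) (r::nat) P M.
     d \<ge> 1 \<longrightarrow> \<rho> > 0 \<longrightarrow> finite V \<longrightarrow> has_density d \<rho> V obj \<longrightarrow>
     shallow_minor r V (inter_graph obj) P M \<longrightarrow> P \<noteq> {} \<longrightarrow>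
     real (card M) / real (card P) \<le> \<rho> * (real r + 2) powr (C * real d)"
proof (intro exI[of _ 5] conjI allI impI)
  fix d :: nat and \<rho> :: real and V :: "nat set" and obj :: "nat \<Rightarrow> (nat \<Rightarrow> real) set"
    and r :: nat and P M
  assume "d \<ge> 1" "\<rho> > 0" "finite V" "has_density d \<rho> V obj"
    "shallow_minor r V (inter_graph obj) P M" "P \<noteq> {}"
  then interpret dense_shallow_minor d \<rho> V obj r P M
    by unfold_locales auto
  have "0 < real (card P)" using finite_clusters \<open>P \<noteq> {}\<close> by (simp add: card_gt_0_iff)
  then have "real (card M) / real (card P) \<le> \<rho> * (18 * real r + 18) ^ d"
    using card_edges_le by (simp add: divide_le_eq mult.commute)
  also have "\<dots> \<le> \<rho> * (real r + 2) powr (5 * real d)"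
    using power_18_mult_succ_le_powr_5 \<open>\<rho> > 0\<close> by (intro mult_left_mono) auto
  finally show "real (card M) / real (card P) \<le> \<rho> * (real r + 2) powr (5 * real d)" .
qed simp


end
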